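(* Let $U=\{(x,f(x)):x\in\mathbb{F}_{q^n}\}$ and $W=\{(x,g(x)):x\in\mathbb{F}_{q^n}\}$, where $f,g$ are $q$-polynomials (so these are $n$-dimensional $\mathbb{F}_q$-subspaces of $\mathbb{F}_{q^n}^2$ with $\langle(0,1)\rangle\notin L_U,L_W$), and let $A,B$ be the Dickson matrices of $f,g$. Then $L_U=L_W$ if and only if $A$ and $B$ have equal corresponding principal minors, i.e. $\det A[\alpha|\alpha]=\det B[\alpha|\alpha]$ for all nonempty $\alpha\subseteq\mathbb{Z}_n$.
   Context: $q$ a prime power, $n\ge2$; $L_U=\{\langle u\rangle_{\mathbb{F}_{q^n}}:u\in U\setminus\{0\}\}\subseteq\mathrm{PG}(1,q^n)$. A $q$-polynomial is $f(x)=\sum_{j=0}^{n-1}a_jx^{q^j}\in\mathbb{F}_{q^n}[x]$; its Dickson matrix is the $n\times n$ matrix $A$ indexed by $\mathbb{Z}_n$ with $A[i|j]=a_{j-i}^{q^i}$ (indices mod $n$). $A[\alpha|\beta]$ is the submatrix with rows in $\alpha$ and columns in $\beta$. *)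

theory Defs
  imports "HOL-Computational_Algebra.Primes"
          "Jordan_Normal_Form.Determinant" "Jordan_Normal_Form.DL_Submatrix"
begin

definition qpoly :: "nat \<Rightarrow> nat \<Rightarrow> (nat \<Rightarrow> 'a::field) \<Rightarrow> 'a \<Rightarrow> 'a" where
  "qpoly q n a x = (\<Sum>j<n. a j * x ^ (q ^ j))"

definition dickson_matrix :: "nat \<Rightarrow> nat \<Rightarrow> (nat \<Rightarrow> 'a::field) \<Rightarrow> 'a mat" where
  "dickson_matrix q n a = mat n n (\<lambda>(i,j). (a ((j + n - i) mod n)) ^ (q ^ i))"

definition graph_space :: "nat \<Rightarrow> nat \<Rightarrow> (nat \<Rightarrow> 'a::field) \<Rightarrow> ('a \<times> 'a) set" where
  "graph_space q n a = {(x, qpoly q n a x) | x. True}"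

definition proj_point :: "'a::field \<times> 'a \<Rightarrow> ('a \<times> 'a) set" where
  "proj_point u = {(c * fst u, c * snd u) | c. c \<noteq> 0}"

definition linear_set :: "('a::field \<times> 'a) set \<Rightarrow> ('a \<times> 'a) set set" where
  "linear_set U = proj_point ` (U - {(0,0)})"

end

theory Submission
  imports Defs
begin

text \<open>
  A point \<open><(1, l)>\<close> lies in \<open>L_U\<close> iff \<open>f(x) - l x\<close> has a nonzero root, i.e. iff the
  Dickson matrix of \<open>f - l x\<close>, which is \<open>A - diag(l, l^q, ..., l^(q^(n-1)))\<close>, is singular.
  Expanding along the diagonal, \<open>P_f(l) = det (A - diag(l^(q^i)))\<close> is a polynomial in \<open>l\<close> whose
  coefficient at \<open>l^(\<Sum>i\<notin>\<alpha>. q^i)\<close> is \<open>\<plusminus> det A[\<alpha>|\<alpha>]\<close>; these exponents are pairwise distinct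
  (base-\<open>q\<close> digits), so \<open>P_f\<close> and the principal minors of \<open>A\<close> determine each other.
  Dickson determinants lie in \<open>F_q\<close>, so \<open>P_f^(q-1)\<close> is the indicator function of the
  complement of the root set of \<open>P_f\<close>. If \<open>L_U = L_W\<close>, then \<open>P_f^(q-1) - P_g^(q-1)\<close> vanishes on
  all of \<open>F_(q^n)\<close> but has degree \<open>< q^n\<close>, hence is zero; as \<open>P_f\<close> and \<open>P_g\<close> have the same
  leading coefficient and \<open>q - 1\<close> is a unit in characteristic \<open>p\<close>, this forces \<open>P_f = P_g\<close>.
\<close>

section \<open>Principal minors\<close>

lemma bij_betw_permutes_conj:
  assumes bij: "bij_betw f A B" and inv: "\<And>x. x \<in> A \<Longrightarrow> f' (f x) = x" and fin: "finite A"
  shows "bij_betw (\<lambda>s x. if x \<in> B then f (s (f' x)) else x) {s. s permutes A} {p. p permutes B}"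
    (is "bij_betw ?conj _ _")
proof (rule bij_betw_imageI)
  have fB: "\<And>x. x \<in> A \<Longrightarrow> f x \<in> B" using bij by (auto simp: bij_betw_def)
  have f'A: "\<And>x. x \<in> B \<Longrightarrow> f' x \<in> A" and ff': "\<And>x. x \<in> B \<Longrightarrow> f (f' x) = x"
    using bij inv by (auto simp: bij_betw_def)
  show "inj_on ?conj {s. s permutes A}"
  proof (rule inj_onI, rule ext)
    fix s t a assume s: "s \<in> {s. s permutes A}" and t: "t \<in> {s. s permutes A}" and e: "?conj s = ?conj t"
    show "s a = t a"
    proof (cases "a \<in> A")
      case True
      have "?conj s (f a) = ?conj t (f a)" using e by (rule fun_cong)
      hence "f (s a) = f (t a)" using True fB inv by simp
      moreover have "s a \<in> A" "t a \<in> A" using s t True permutes_in_image by fastforce+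
      ultimately show ?thesis using bij by (auto simp: bij_betw_def inj_on_def)
    qed (use s t in \<open>simp add: permutes_not_in\<close>)
  qed
  show "?conj ` {s. s permutes A} = {p. p permutes B}"
  proof
    have "permutes_bij_finite s A B f f'" if "s permutes A" for s
      using that bij inv fin by unfold_locales auto
    thus "?conj ` {s. s permutes A} \<subseteq> {p. p permutes B}"
      using permutes_bij.permutes_p' permutes_bij_finite.axioms(1) by fastforce
    show "{p. p permutes B} \<subseteq> ?conj ` {s. s permutes A}"
    proof
      fix p assume p: "p \<in> {p. p permutes B}"
      define s where "s = (\<lambda>a. if a \<in> A then f' (p (f a)) else a)"
      have "bij_betw f' B A" using bij inv by (auto simp: bij_betw_def inj_on_def image_image)
      hence "permutes_bij p B A f' f" using p ff' by unfold_locales auto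
      hence "s permutes A" using permutes_bij.permutes_p' s_def by fastforce
      moreover have "?conj s = p"
      proof
        fix x show "?conj s x = p x"
        proof (cases "x \<in> B")
          case True
          hence "p x \<in> B" using p permutes_in_image by fastforce
          thus ?thesis using True f'A ff' by (simp add: s_def)
        qed (use p in \<open>simp add: permutes_not_in\<close>)
      qed
      ultimately show "p \<in> ?conj ` {s. s permutes A}" by blast
    qed
  qed
qed

lemma sum_permutes_conj:
  fixes M :: "'b \<Rightarrow> 'b \<Rightarrow> 'c::comm_ring_1"
  assumes bij: "bij_betw f A B" and inv: "\<And>x. x \<in> A \<Longrightarrow> f' (f x) = x" and fin: "finite A"
  shows "(\<Sum>p | p permutes B. of_int (sign p) * (\<Prod>x\<in>B. M x (p x))) =
         (\<Sum>s | s permutes A. of_int (sign s) * (\<Prod>a\<in>A. M (f a) (f (s a))))"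
proof -
  define conj where "conj = (\<lambda>s x. if x \<in> B then f (s (f' x)) else x)"
  have fB: "\<And>x. x \<in> A \<Longrightarrow> f x \<in> B" using bij by (auto simp: bij_betw_def)
  have "(\<Sum>p | p permutes B. of_int (sign p) * (\<Prod>x\<in>B. M x (p x))) =
        (\<Sum>s | s permutes A. of_int (sign (conj s)) * (\<Prod>x\<in>B. M x (conj s x)))"
    unfolding conj_def by (rule sum.reindex_bij_betw[OF bij_betw_permutes_conj[OF assms], symmetric])
  also have "\<dots> = (\<Sum>s | s permutes A. of_int (sign s) * (\<Prod>a\<in>A. M (f a) (f (s a))))"
  proof (rule sum.cong[OF refl])
    fix s assume s: "s \<in> {s. s permutes A}"
    have "permutes_bij_finite s A B f f'" using s bij inv fin by unfold_locales auto
    hence "sign (conj s) = sign s" unfolding conj_def by (rule permutes_bij_finite.sign_p')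
    moreover have "(\<Prod>x\<in>B. M x (conj s x)) = (\<Prod>a\<in>A. M (f a) (f (s a)))"
      using prod.reindex_bij_betw[OF bij, of "\<lambda>x. M x (conj s x)"] by (simp add: conj_def fB inv)
    ultimately show "of_int (sign (conj s)) * (\<Prod>x\<in>B. M x (conj s x)) =
      of_int (sign s) * (\<Prod>a\<in>A. M (f a) (f (s a)))" by simp
  qed
  finally show ?thesis .
qed

lemma bij_betw_pick:
  assumes "finite \<beta>"
  shows "bij_betw (pick \<beta>) {0..<card \<beta>} \<beta>"
proof (rule bij_betw_imageI)
  show "inj_on (pick \<beta>) {0..<card \<beta>}"
    by (rule inj_onI) (metis atLeastLessThan_iff linorder_neqE_nat nat_less_le pick_mono)
  show "pick \<beta> ` {0..<card \<beta>} = \<beta>"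
  proof
    show "pick \<beta> ` {0..<card \<beta>} \<subseteq> \<beta>" using pick_in_set by auto
    show "\<beta> \<subseteq> pick \<beta> ` {0..<card \<beta>}"
    proof
      fix x assume x: "x \<in> \<beta>"
      have "{a\<in>\<beta>. a < x} \<subset> \<beta>" using x by auto
      hence "card {a\<in>\<beta>. a < x} < card \<beta>" using assms psubset_card_mono by blast
      thus "x \<in> pick \<beta> ` {0..<card \<beta>}" using pick_card_in_set[OF x] by force
    qed
  qed
qed

lemma det_submatrix_eq_sum_permutes:
  fixes A :: "'c::comm_ring_1 mat"
  assumes A: "A \<in> carrier_mat n n" and \<beta>: "\<beta> \<subseteq> {0..<n}"
  shows "det (submatrix A \<beta> \<beta>) = (\<Sum>p | p permutes \<beta>. of_int (sign p) * (\<Prod>x\<in>\<beta>. A $$ (x, p x)))"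
proof -
  let ?k = "card \<beta>"
  have fin: "finite \<beta>" using \<beta> finite_subset by blast
  have rows: "{i. i < dim_row A \<and> i \<in> \<beta>} = \<beta>" and cols: "{i. i < dim_col A \<and> i \<in> \<beta>} = \<beta>"
    using A \<beta> by auto
  have car: "submatrix A \<beta> \<beta> \<in> carrier_mat ?k ?k"
    by (rule carrier_matI) (simp_all only: dim_submatrix rows cols)
  have entry: "submatrix A \<beta> \<beta> $$ (t, s t) = A $$ (pick \<beta> t, pick \<beta> (s t))"
    if "s permutes {0..<?k}" "t < ?k" for s t
    using that rows cols submatrix_index[of t A \<beta> "s t" \<beta>] permutes_in_image[of s _ t] by simp
  have "det (submatrix A \<beta> \<beta>) =
      (\<Sum>s | s permutes {0..<?k}. of_int (sign s) * (\<Prod>t\<in>{0..<?k}. A $$ (pick \<beta> t, pick \<beta> (s t))))"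
    unfolding det_def'[OF car] by (intro sum.cong refl arg_cong2[where f = "(*)"] prod.cong) (auto simp: entry)
  also have "\<dots> = (\<Sum>p | p permutes \<beta>. of_int (sign p) * (\<Prod>x\<in>\<beta>. A $$ (x, p x)))"
    by (rule sum_permutes_conj[symmetric, OF bij_betw_pick[OF fin], of "\<lambda>x. card {a\<in>\<beta>. a < x}"])
       (simp_all add: card_pick)
  finally show ?thesis .
qed

lemma det_submatrix_empty: "det (submatrix (A :: 'c::comm_ring_1 mat) {} {}) = 1"
proof -
  have "submatrix A {} {} = 1\<^sub>m 0" by (rule eq_matI) (auto simp: dim_submatrix)
  thus ?thesis by simp
qed

lemma permutes_subset_iff:
  assumes "\<beta> \<subseteq> I"
  shows "p permutes \<beta> \<longleftrightarrow> p permutes I \<and> (\<forall>i\<in>I - \<beta>. p i = i)"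
  using assms permutes_subset permutes_not_in unfolding permutes_def by blast

text \<open>Only permutations fixing the complement of \<open>\<beta>\<close> pointwise survive the weights.\<close>

lemma sum_permutes_fixing_complement:
  fixes A :: "'c::comm_ring_1 mat"
  assumes A: "A \<in> carrier_mat n n" and \<beta>: "\<beta> \<subseteq> {0..<n}"
  shows "(\<Sum>p | p permutes {0..<n}. of_int (sign p) *
            ((\<Prod>i\<in>\<beta>. A $$ (i, p i)) * (\<Prod>i\<in>{0..<n} - \<beta>. if p i = i then d i else 0))) =
         det (submatrix A \<beta> \<beta>) * (\<Prod>i\<in>{0..<n} - \<beta>. d i)"
proof -
  let ?I = "{0..<n}"
  let ?w = "\<lambda>p. \<Prod>i\<in>?I - \<beta>. if p i = i then d i else 0"
  have "(\<Sum>p | p permutes ?I. of_int (sign p) * ((\<Prod>i\<in>\<beta>. A $$ (i, p i)) * ?w p)) =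
        (\<Sum>p | p permutes \<beta>. of_int (sign p) * ((\<Prod>i\<in>\<beta>. A $$ (i, p i)) * (\<Prod>i\<in>?I - \<beta>. d i)))"
  proof (rule sum.mono_neutral_cong_right)
    show "finite {p. p permutes ?I}" by (simp add: finite_permutations)
    show "{p. p permutes \<beta>} \<subseteq> {p. p permutes ?I}" using \<beta> permutes_subset by blast
    show "\<forall>p \<in> {p. p permutes ?I} - {p. p permutes \<beta>}.
            of_int (sign p) * ((\<Prod>i\<in>\<beta>. A $$ (i, p i)) * ?w p) = 0"
    proof
      fix p assume "p \<in> {p. p permutes ?I} - {p. p permutes \<beta>}"
      then obtain i where "i \<in> ?I - \<beta>" "p i \<noteq> i" using permutes_subset_iff[OF \<beta>] by blast
      hence "?w p = 0" by (intro prod_zero) auto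
      thus "of_int (sign p) * ((\<Prod>i\<in>\<beta>. A $$ (i, p i)) * ?w p) = 0" by simp
    qed
    show "of_int (sign p) * ((\<Prod>i\<in>\<beta>. A $$ (i, p i)) * ?w p) =
          of_int (sign p) * ((\<Prod>i\<in>\<beta>. A $$ (i, p i)) * (\<Prod>i\<in>?I - \<beta>. d i))"
      if "p \<in> {p. p permutes \<beta>}" for p
    proof -
      have "\<forall>i\<in>?I - \<beta>. p i = i" using that permutes_subset_iff[OF \<beta>] by blast
      hence "?w p = (\<Prod>i\<in>?I - \<beta>. d i)" by (intro prod.cong) auto
      thus ?thesis by simp
    qed
  qed
  also have "\<dots> = det (submatrix A \<beta> \<beta>) * (\<Prod>i\<in>?I - \<beta>. d i)"
    by (simp add: det_submatrix_eq_sum_permutes[OF A \<beta>] sum_distrib_right mult.assoc)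
  finally show ?thesis .
qed

lemma det_add_diagonal:
  fixes A :: "'c::comm_ring_1 mat"
  assumes A: "A \<in> carrier_mat n n"
  shows "det (mat n n (\<lambda>(i,j). A $$ (i,j) + (if i = j then d i else 0))) =
    (\<Sum>\<beta>\<in>Pow {0..<n}. det (submatrix A \<beta> \<beta>) * (\<Prod>i\<in>{0..<n} - \<beta>. d i))"
proof -
  let ?I = "{0..<n}"
  let ?D = "\<lambda>p i. if p i = i then d i else 0"
  have car: "mat n n (\<lambda>(i,j). A $$ (i,j) + (if i = j then d i else 0)) \<in> carrier_mat n n" by simp
  have "det (mat n n (\<lambda>(i,j). A $$ (i,j) + (if i = j then d i else 0))) =
     (\<Sum>p | p permutes ?I. of_int (sign p) * (\<Prod>i\<in>?I. A $$ (i, p i) + ?D p i))"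
    unfolding det_def'[OF car]
    by (intro sum.cong refl arg_cong2[where f = "(*)"] prod.cong)
       (auto simp: permutes_in_image)
  also have "\<dots> = (\<Sum>p | p permutes ?I. \<Sum>\<beta>\<in>Pow ?I.
                      of_int (sign p) * ((\<Prod>i\<in>\<beta>. A $$ (i, p i)) * (\<Prod>i\<in>?I - \<beta>. ?D p i)))"
    by (simp add: prod_add sum_distrib_left)
  also have "\<dots> = (\<Sum>\<beta>\<in>Pow ?I. \<Sum>p | p permutes ?I.
                      of_int (sign p) * ((\<Prod>i\<in>\<beta>. A $$ (i, p i)) * (\<Prod>i\<in>?I - \<beta>. ?D p i)))"
    by (rule sum.swap)
  also have "\<dots> = (\<Sum>\<beta>\<in>Pow ?I. det (submatrix A \<beta> \<beta>) * (\<Prod>i\<in>?I - \<beta>. d i))"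
    by (rule sum.cong[OF refl]) (simp add: sum_permutes_fixing_complement[OF A])
  finally show ?thesis .
qed

section \<open>Frobenius maps on a field of order \<open>q^n\<close>\<close>

lemma power_card_UNIV_eq_self:
  fixes x :: "'a::{finite,field}"
  shows "x ^ card (UNIV :: 'a set) = x"
proof (cases "x = 0")
  case False
  let ?N = "UNIV - {0::'a}"
  have "bij_betw (\<lambda>y. x * y) ?N ?N"
    by (rule bij_betwI[of _ _ _ "\<lambda>y. y / x"]) (use False in auto)
  hence "(\<Prod>y\<in>?N. x * y) = (\<Prod>y\<in>?N. y)" by (rule prod.reindex_bij_betw)
  moreover have "(\<Prod>y\<in>?N. x * y) = x ^ card ?N * (\<Prod>y\<in>?N. y)" by (simp add: prod.distrib)
  moreover have "(\<Prod>y\<in>?N. y) \<noteq> 0" by simp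
  ultimately have one: "x ^ card ?N = 1" by simp
  have "card (UNIV :: 'a set) = Suc (card ?N)"
    using finite_UNIV_card_ge_0[where 'a = 'a] card_Diff_singleton[of "0::'a" UNIV] by simp
  hence "x ^ card (UNIV :: 'a set) = x * x ^ card ?N" by (simp only: power_Suc)
  thus ?thesis by (simp only: one mult_1_right)
qed (simp add: finite_UNIV_card_ge_0)

lemma CHAR_dvd_card_UNIV: "CHAR('a::{finite,ring_1}) dvd card (UNIV :: 'a set)"
proof -
  have "bij_betw (\<lambda>x::'a. x + 1) UNIV UNIV" by (rule bij_betwI[of _ _ _ "\<lambda>x. x - 1"]) auto
  hence "(\<Sum>x\<in>UNIV. x + 1) = (\<Sum>x\<in>(UNIV::'a set). x)" by (rule sum.reindex_bij_betw)
  hence "of_nat (card (UNIV :: 'a set)) = (0 :: 'a)" by (simp add: sum.distrib)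
  thus ?thesis by (simp add: of_nat_eq_0_iff_char_dvd)
qed

locale fqn =
  fixes q n k :: nat and field_type :: "'a::{finite,field} itself"
  assumes prime_CHAR: "prime CHAR('a)"
    and q_def: "q = CHAR('a) ^ k" and k_pos: "k > 0" and n_ge_2: "n \<ge> 2"
    and card_UNIV: "card (UNIV :: 'a set) = q ^ n"
begin

lemma q_ge_2: "q \<ge> 2"
proof -
  have "CHAR('a) \<ge> 2" using prime_CHAR prime_ge_2_nat by blast
  hence "CHAR('a) ^ 1 \<le> CHAR('a) ^ k" using k_pos by (intro power_increasing) auto
  thus ?thesis using q_def \<open>CHAR('a) \<ge> 2\<close> by simp
qed

lemma power_q_eq_power_CHAR: "q ^ i = CHAR('a) ^ (k * i)"
  by (simp add: q_def power_mult)

lemma frobenius_add: "(x + y :: 'a) ^ (q ^ i) = x ^ (q ^ i) + y ^ (q ^ i)"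
  by (rule freshmans_dream'[OF prime_CHAR power_q_eq_power_CHAR])

lemma frobenius_sum: "(sum f A :: 'a) ^ (q ^ i) = (\<Sum>j\<in>A. f j ^ (q ^ i))"
  by (rule freshmans_dream_sum'[OF prime_CHAR power_q_eq_power_CHAR])

lemma frobenius_minus: "(- x :: 'a) ^ (q ^ i) = - (x ^ (q ^ i))"
proof -
  have "q ^ i > 0" using q_ge_2 by simp
  hence "(x + - x) ^ (q ^ i) = 0" by simp
  hence "x ^ (q ^ i) + (- x) ^ (q ^ i) = 0" by (simp only: frobenius_add)
  thus ?thesis by (simp add: eq_neg_iff_add_eq_0 add.commute)
qed

lemma frobenius_diff: "(x - y :: 'a) ^ (q ^ i) = x ^ (q ^ i) - y ^ (q ^ i)"
  using frobenius_add[of x "- y" i] frobenius_minus[of y i] by simp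

lemma power_q_power_mod: "(x::'a) ^ (q ^ j) = x ^ (q ^ (j mod n))"
proof -
  have period: "x ^ (q ^ (m * n)) = x" for m
  proof (induction m)
    case (Suc m)
    have "q ^ (Suc m * n) = q ^ (m * n) * card (UNIV :: 'a set)"
      by (simp add: card_UNIV power_add)
    hence "x ^ (q ^ (Suc m * n)) = (x ^ (q ^ (m * n))) ^ card (UNIV :: 'a set)"
      by (simp only: power_mult)
    thus ?case using Suc power_card_UNIV_eq_self by simp
  qed simp
  have "x ^ (q ^ j) = (x ^ (q ^ (j div n * n))) ^ (q ^ (j mod n))"
    by (simp flip: power_mult power_add)
  thus ?thesis by (simp only: period)
qed

lemma of_int_sign_power_q: "(of_int (sign p) :: 'a) ^ q = of_int (sign p)"
proof -
  have "(- 1 :: 'a) ^ q = - 1" using frobenius_minus[of 1 1] by simp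
  thus ?thesis by (cases "sign p = 1") (auto simp: sign_def)
qed

end

section \<open>Dickson matrices\<close>

lemma add_mod_sub_mod_eq: "u < n \<Longrightarrow> i < n \<Longrightarrow> ((u + i) mod n + n - i) mod (n::nat) = u"
  by (cases "u + i < n") (auto simp: le_mod_geq)

lemma sub_mod_add_mod_eq: "j < n \<Longrightarrow> i < n \<Longrightarrow> ((j + n - i) mod n + i) mod (n::nat) = j"
  by (simp add: mod_add_left_eq)

lemma sub_mod_eq_0_iff: "i < n \<Longrightarrow> j < n \<Longrightarrow> (j + n - i) mod (n::nat) = 0 \<longleftrightarrow> i = j"
  by (cases "i \<le> j") (auto simp: le_mod_geq)

lemma sub_mod_Suc_mod:
  assumes "i < (n::nat)" "j < n"
  shows "(Suc j mod n + n - Suc i mod n) mod n = (j + n - i) mod n"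
  using assms by (cases "Suc i < n"; cases "Suc j < n") (auto simp: mod_if)

lemma dickson_matrix_carrier: "dickson_matrix q n c \<in> carrier_mat n n"
  unfolding dickson_matrix_def by simp

lemma dickson_matrix_index:
  "i < n \<Longrightarrow> j < n \<Longrightarrow> dickson_matrix q n c $$ (i,j) = c ((j + n - i) mod n) ^ (q ^ i)"
  unfolding dickson_matrix_def by simp

context fqn begin

lemma dickson_row_sum:
  fixes c :: "nat \<Rightarrow> 'a"
  assumes i: "i < n"
  shows "(\<Sum>j<n. dickson_matrix q n c $$ (i,j) * x ^ (q ^ j)) = qpoly q n c x ^ (q ^ i)"
proof -
  define rot where "rot = (\<lambda>k. (k + i) mod n)"
  have rot: "bij_betw rot {..<n} {..<n}"
    by (rule bij_betwI[of _ _ _ "\<lambda>j. (j + n - i) mod n"])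
       (use i add_mod_sub_mod_eq sub_mod_add_mod_eq in \<open>auto simp: rot_def\<close>)
  have "qpoly q n c x ^ (q ^ i) = (\<Sum>k<n. c k ^ (q ^ i) * x ^ (q ^ (k + i)))"
    unfolding qpoly_def frobenius_sum by (simp add: power_mult_distrib power_add flip: power_mult)
  also have "\<dots> = (\<Sum>k<n. c ((rot k + n - i) mod n) ^ (q ^ i) * x ^ (q ^ rot k))"
    using i by (intro sum.cong refl) (simp add: rot_def add_mod_sub_mod_eq flip: power_q_power_mod)
  also have "\<dots> = (\<Sum>j<n. c ((j + n - i) mod n) ^ (q ^ i) * x ^ (q ^ j))"
    by (rule sum.reindex_bij_betw[OF rot])
  finally show ?thesis using i by (simp add: dickson_matrix_index)
qed

lemma qpoly_diff: "qpoly q n c (x - y) = qpoly q n c x - qpoly q n c (y :: 'a)"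
  unfolding qpoly_def by (simp add: frobenius_diff right_diff_distrib sum_subtractf)

lemma qpoly_0: "qpoly q n c 0 = (0 :: 'a)"
  using qpoly_diff[of c 0 0] by simp

lemma qpoly_update_0: "qpoly q n (c(0 := c 0 - l)) x = qpoly q n c x - l * (x :: 'a)"
proof -
  have "qpoly q n (c(0 := c 0 - l)) x = (\<Sum>j<n. c j * x ^ (q ^ j) - (if j = 0 then l * x else 0))"
    unfolding qpoly_def by (rule sum.cong) (auto simp: algebra_simps)
  thus ?thesis using n_ge_2 by (simp add: sum_subtractf qpoly_def)
qed

lemma qpoly_eq_0_imp_coeffs_eq_0:
  assumes zero: "\<And>y. qpoly q n v y = (0 :: 'a)" and i0: "i0 < n"
  shows "v i0 = 0"
proof (rule ccontr)
  assume v: "v i0 \<noteq> 0"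
  define R where "R = (\<Sum>i<n. monom (v i) (q ^ i))"
  have "coeff R (q ^ i0) = (\<Sum>i<n. if i = i0 then v i else 0)"
    using q_ge_2 by (simp add: R_def coeff_sum coeff_monom power_inject_exp)
  hence "R \<noteq> 0" using i0 v by auto
  have "degree R \<le> q ^ (n - 1)"
    unfolding R_def
  proof (rule degree_sum_le)
    fix i assume "i \<in> {..<n}"
    hence "q ^ i \<le> q ^ (n - 1)" using q_ge_2 by (intro power_increasing) auto
    thus "degree (monom (v i) (q ^ i)) \<le> q ^ (n - 1)" using degree_monom_le le_trans by blast
  qed simp
  also have "\<dots> < q ^ n" using q_ge_2 n_ge_2 by (intro power_strict_increasing) auto
  finally have "card {x. poly R x = 0} < card (UNIV :: 'a set)"
    using card_poly_roots_bound[OF \<open>R \<noteq> 0\<close>] card_UNIV by linarith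
  moreover have "{x. poly R x = 0} = UNIV"
    using zero by (auto simp: R_def qpoly_def poly_sum poly_monom)
  ultimately show False by simp
qed

lemma det_dickson_eq_0_if_root:
  fixes c :: "nat \<Rightarrow> 'a"
  assumes x: "x \<noteq> 0" "qpoly q n c x = 0"
  shows "det (dickson_matrix q n c) = 0"
proof -
  let ?D = "dickson_matrix q n c"
  have D: "?D \<in> carrier_mat n n" by (rule dickson_matrix_carrier)
  define v where "v = vec n (\<lambda>j. x ^ (q ^ j))"
  have "v \<in> carrier_vec n" "v $ 0 = x" using n_ge_2 by (simp_all add: v_def)
  hence "v \<noteq> 0\<^sub>v n" using x n_ge_2 by auto
  moreover have "?D *\<^sub>v v = 0\<^sub>v n"
  proof (rule eq_vecI)
    fix i assume "i < dim_vec (0\<^sub>v n :: 'a vec)"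
    hence i: "i < n" by simp
    have "(?D *\<^sub>v v) $ i = qpoly q n c x ^ (q ^ i)"
      using i D by (simp add: mult_mat_vec_def scalar_prod_def v_def atLeast0LessThan dickson_row_sum)
    thus "(?D *\<^sub>v v) $ i = 0\<^sub>v n $ i" using i x(2) q_ge_2 by simp
  qed (use D in simp)
  ultimately show ?thesis
    using det_0_iff_vec_prod_zero_field[OF D] \<open>v \<in> carrier_vec n\<close> by blast
qed

lemma surj_qpoly_if_no_root:
  fixes c :: "nat \<Rightarrow> 'a"
  assumes "\<And>x. qpoly q n c x = 0 \<Longrightarrow> x = 0"
  shows "surj (qpoly q n c)"
proof (rule finite_UNIV_inj_surj[OF finite_UNIV], rule injI)
  fix x y assume "qpoly q n c x = qpoly q n c y"
  hence "qpoly q n c (x - y) = 0" by (simp add: qpoly_diff)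
  thus "x = y" using assms by fastforce
qed

lemma root_if_det_dickson_eq_0:
  fixes c :: "nat \<Rightarrow> 'a"
  assumes singular: "det (dickson_matrix q n c) = 0"
  shows "\<exists>x. x \<noteq> 0 \<and> qpoly q n c x = 0"
proof -
  let ?D = "dickson_matrix q n c"
  have D: "?D \<in> carrier_mat n n" by (rule dickson_matrix_carrier)
  have Dt: "transpose_mat ?D \<in> carrier_mat n n" using D by simp
  have "det (transpose_mat ?D) = 0" using det_transpose[OF D] singular by simp
  then obtain v where v: "v \<in> carrier_vec n" "v \<noteq> 0\<^sub>v n" and vD: "transpose_mat ?D *\<^sub>v v = 0\<^sub>v n"
    using det_0_iff_vec_prod_zero_field[OF Dt] by blast
  show ?thesis
  proof (rule ccontr)
    assume "\<not> (\<exists>x. x \<noteq> 0 \<and> qpoly q n c x = 0)"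
    hence surj: "surj (qpoly q n c)" by (intro surj_qpoly_if_no_root) blast
    have col: "(\<Sum>i<n. ?D $$ (i,j) * v $ i) = 0" if j: "j < n" for j
    proof -
      have "(transpose_mat ?D *\<^sub>v v) $ j = 0" using vD j by simp
      thus ?thesis using j v D by (simp add: mult_mat_vec_def scalar_prod_def atLeast0LessThan mult.commute)
    qed
    txt \<open>The row vector \<open>v\<close> annihilates the columns of \<open>D\<close>, so the \<open>q\<close>-polynomial with coefficients
      \<open>v\<close> vanishes on the image of \<open>f\<close>, which is everything.\<close>
    have "qpoly q n (($) v) y = 0" for y
    proof -
      obtain x where y: "y = qpoly q n c x" using surj by (metis surjD)
      have "qpoly q n (($) v) y = (\<Sum>i<n. v $ i * y ^ (q ^ i))" by (simp add: qpoly_def)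
      also have "\<dots> = (\<Sum>i<n. v $ i * (\<Sum>j<n. ?D $$ (i,j) * x ^ (q ^ j)))"
        by (rule sum.cong[OF refl]) (simp add: dickson_row_sum y)
      also have "\<dots> = (\<Sum>j<n. \<Sum>i<n. v $ i * (?D $$ (i,j) * x ^ (q ^ j)))"
        unfolding sum_distrib_left by (rule sum.swap)
      also have "\<dots> = (\<Sum>j<n. (\<Sum>i<n. ?D $$ (i,j) * v $ i) * x ^ (q ^ j))"
        unfolding sum_distrib_right by (intro sum.cong refl) (simp only: mult_ac)
      also have "\<dots> = 0" using col by simp
      finally show ?thesis .
    qed
    hence "v $ i = 0" if "i < n" for i using qpoly_eq_0_imp_coeffs_eq_0 that by blast
    thus False using v by (metis eq_vecI carrier_vecD index_zero_vec)
  qed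
qed

lemma det_dickson_eq_0_iff:
  fixes c :: "nat \<Rightarrow> 'a"
  shows "det (dickson_matrix q n c) = 0 \<longleftrightarrow> (\<exists>x. x \<noteq> 0 \<and> qpoly q n c x = 0)"
  using det_dickson_eq_0_if_root root_if_det_dickson_eq_0 by blast

lemma dickson_matrix_update_0:
  fixes c :: "nat \<Rightarrow> 'a"
  shows "dickson_matrix q n (c(0 := c 0 - l)) =
    mat n n (\<lambda>(i,j). dickson_matrix q n c $$ (i,j) + (if i = j then - (l ^ (q ^ i)) else 0))"
    (is "_ = ?M")
proof (rule eq_matI)
  fix i j assume "i < dim_row ?M" "j < dim_col ?M"
  hence "i < n" "j < n" by auto
  thus "dickson_matrix q n (c(0 := c 0 - l)) $$ (i,j) = ?M $$ (i,j)"
    by (auto simp: dickson_matrix_index sub_mod_eq_0_iff frobenius_diff)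
qed (simp_all add: dickson_matrix_def)

lemma det_dickson_update_0:
  fixes c :: "nat \<Rightarrow> 'a"
  shows "det (dickson_matrix q n (c(0 := c 0 - l))) =
    (\<Sum>\<beta>\<in>Pow {0..<n}. det (submatrix (dickson_matrix q n c) \<beta> \<beta>) * (\<Prod>i\<in>{0..<n} - \<beta>. - (l ^ (q ^ i))))"
  unfolding dickson_matrix_update_0 by (rule det_add_diagonal[OF dickson_matrix_carrier])

text \<open>Raising all entries to the \<open>q\<close>-th power shifts the Dickson matrix cyclically along its
  diagonal, which leaves the determinant unchanged.\<close>

lemma det_dickson_power_q:
  fixes c :: "nat \<Rightarrow> 'a"
  shows "det (dickson_matrix q n c) ^ q = det (dickson_matrix q n c)"
proof -
  let ?D = "dickson_matrix q n c"
  let ?I = "{0..<n}"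
  define s where "s = (\<lambda>i::nat. (i + 1) mod n)"
  have one: "1 < n" using n_ge_2 by simp
  have s: "bij_betw s ?I ?I"
    by (rule bij_betwI[of _ _ _ "\<lambda>j. (j + n - 1) mod n"])
       (use one add_mod_sub_mod_eq[OF _ one] sub_mod_add_mod_eq[OF _ one] in \<open>auto simp: s_def\<close>)
  have entry: "?D $$ (i,j) ^ q = ?D $$ (s i, s j)" if "i < n" "j < n" for i j
  proof -
    have "?D $$ (s i, s j) = c ((j + n - i) mod n) ^ (q ^ (i + 1))"
      using that one by (simp add: dickson_matrix_index s_def sub_mod_Suc_mod flip: power_q_power_mod)
    thus ?thesis using that by (simp add: dickson_matrix_index power_mult[symmetric] mult.commute)
  qed
  have "det ?D ^ q = det ?D ^ (q ^ 1)" by simp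
  also have "\<dots> = (\<Sum>p | p permutes ?I. (of_int (sign p) * (\<Prod>i\<in>?I. ?D $$ (i, p i))) ^ (q ^ 1))"
    unfolding det_def'[OF dickson_matrix_carrier] by (rule frobenius_sum)
  also have "\<dots> = (\<Sum>p | p permutes ?I. of_int (sign p) * (\<Prod>i\<in>?I. ?D $$ (s i, s (p i))))"
  proof (rule sum.cong[OF refl])
    fix p assume "p \<in> {p. p permutes ?I}"
    hence "(\<Prod>i\<in>?I. ?D $$ (i, p i)) ^ q = (\<Prod>i\<in>?I. ?D $$ (s i, s (p i)))"
      unfolding prod_power_distrib by (intro prod.cong refl) (simp add: entry permutes_in_image)
    thus "(of_int (sign p) * (\<Prod>i\<in>?I. ?D $$ (i, p i))) ^ (q ^ 1) =
          of_int (sign p) * (\<Prod>i\<in>?I. ?D $$ (s i, s (p i)))"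
      by (simp add: power_mult_distrib of_int_sign_power_q)
  qed
  also have "\<dots> = det ?D"
    unfolding det_def'[OF dickson_matrix_carrier]
    by (rule sum_permutes_conj[symmetric, OF s, of "\<lambda>j. (j + n - 1) mod n"])
       (use one add_mod_sub_mod_eq[OF _ one] in \<open>auto simp: s_def\<close>)
  finally show ?thesis .
qed

end

section \<open>The determinant polynomial\<close>

lemma sum_powers_lt_power: "(q::nat) \<ge> 2 \<Longrightarrow> (\<Sum>i<m. q ^ i) < q ^ m"
proof (induction m)
  case (Suc m)
  have "(\<Sum>i<Suc m. q ^ i) < q ^ m + q ^ m" using Suc by simp
  also have "\<dots> \<le> q * q ^ m" using Suc.prems by (simp add: mult_2[symmetric])
  finally show ?case by simp
qed simp

lemma sum_powers_geometric: "(q::nat) \<ge> 1 \<Longrightarrow> (q - 1) * (\<Sum>i<m. q ^ i) + 1 = q ^ m"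
proof (induction m)
  case (Suc m)
  obtain r where r: "q = Suc r" using Suc.prems by (cases q) auto
  have "(q - 1) * (\<Sum>i<Suc m. q ^ i) + 1 = ((q - 1) * (\<Sum>i<m. q ^ i) + 1) + (q - 1) * q ^ m"
    by (simp add: algebra_simps)
  also have "\<dots> = q ^ Suc m" using Suc r by simp
  finally show ?case .
qed simp

lemma sum_powers_inj:
  assumes "(q::nat) \<ge> 2"
  shows "S \<subseteq> {..<m} \<Longrightarrow> T \<subseteq> {..<m} \<Longrightarrow> (\<Sum>i\<in>S. q ^ i) = (\<Sum>i\<in>T. q ^ i) \<Longrightarrow> S = T"
proof (induction m arbitrary: S T)
  case (Suc m)
  have fin: "finite S" "finite T" using Suc.prems finite_subset by blast+
  have low: "(\<Sum>i\<in>X. q ^ i) < q ^ m" if "X \<subseteq> {..<m}" for X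
  proof -
    have "(\<Sum>i\<in>X. q ^ i) \<le> (\<Sum>i<m. q ^ i)" using that by (intro sum_mono2) auto
    also have "\<dots> < q ^ m" using sum_powers_lt_power assms by blast
    finally show ?thesis .
  qed
  have high: "q ^ m \<le> (\<Sum>i\<in>X. q ^ i)" if "m \<in> X" "finite X" for X
    using that by (intro member_le_sum) auto
  have below: "X - {m} \<subseteq> {..<m}" if "X \<subseteq> {..<Suc m}" for X
    using that by auto
  show ?case
  proof (cases "m \<in> S"; cases "m \<in> T")
    assume "m \<in> S" "m \<in> T"
    hence "(\<Sum>i\<in>S - {m}. q ^ i) = (\<Sum>i\<in>T - {m}. q ^ i)"
      using Suc.prems(3) fin by (simp add: sum_diff1_nat)
    hence "S - {m} = T - {m}" using Suc.IH below Suc.prems by blast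
    thus ?thesis using \<open>m \<in> S\<close> \<open>m \<in> T\<close> by blast
  next
    assume "m \<in> S" "m \<notin> T"
    thus ?thesis using Suc.prems low[of T] high[of S] fin below[of T] by force
  next
    assume "m \<notin> S" "m \<in> T"
    thus ?thesis using Suc.prems low[of S] high[of T] fin below[of S] by force
  next
    assume "m \<notin> S" "m \<notin> T"
    hence "S \<subseteq> {..<m}" "T \<subseteq> {..<m}" using Suc.prems by (auto simp: less_Suc_eq)
    thus ?thesis using Suc.IH Suc.prems(3) by blast
  qed
qed simp

text \<open>\<open>P^m - Q^m = (P - Q) * (\<Sum>i<m. P^i * Q^(m-1-i))\<close>, and when \<open>P\<close> and \<open>Q\<close> share degree and
  leading coefficient the second factor has leading coefficient \<open>m * lead_coeff P ^ (m-1) \<noteq> 0\<close>.\<close>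

lemma poly_power_eq_imp_eq:
  fixes P Q :: "'a::field poly"
  assumes e: "P ^ m = Q ^ m" and m: "(of_nat m :: 'a) \<noteq> 0" and d: "degree P = degree Q"
    and l: "lead_coeff P = lead_coeff Q" and l0: "lead_coeff P \<noteq> 0"
  shows "P = Q"
proof -
  obtain m' where m': "m = Suc m'" using m by (cases m) auto
  have P0: "P \<noteq> 0" and Q0: "Q \<noteq> 0" using l0 l by auto
  define S where "S = (\<Sum>p<Suc m'. P ^ p * Q ^ (m' - p))"
  have "P ^ m - Q ^ m = (P - Q) * S" unfolding S_def m' by (rule diff_power_eq_sum)
  hence "(P - Q) * S = 0" using e by simp
  have summand: "coeff (P ^ p * Q ^ (m' - p)) (m' * degree P) = lead_coeff P ^ m'" if "p < Suc m'" for p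
  proof -
    have "degree (P ^ p * Q ^ (m' - p)) = m' * degree P"
      using P0 Q0 d that by (simp add: degree_mult_eq degree_power_eq flip: add_mult_distrib)
    moreover have "lead_coeff (P ^ p * Q ^ (m' - p)) = lead_coeff P ^ m'"
      using l that by (simp add: lead_coeff_mult lead_coeff_power flip: power_add)
    ultimately show ?thesis by simp
  qed
  have "coeff S (m' * degree P) = of_nat m * lead_coeff P ^ m'"
    unfolding S_def coeff_sum using summand m' by simp
  hence "S \<noteq> 0" using m l0 by auto
  thus ?thesis using \<open>(P - Q) * S = 0\<close> by simp
qed

context fqn begin

text \<open>\<open>det_poly c\<close> is \<open>l \<mapsto> det (D_(f - l x))\<close> (see \<open>poly_det_poly\<close>), expanded by
  \<open>det_add_diagonal\<close>.\<close>

definition minor_exponent :: "nat set \<Rightarrow> nat" where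
  "minor_exponent \<beta> = (\<Sum>i\<in>{0..<n} - \<beta>. q ^ i)"

definition minor_coeff :: "(nat \<Rightarrow> 'a) \<Rightarrow> nat set \<Rightarrow> 'a" where
  "minor_coeff c \<beta> = det (submatrix (dickson_matrix q n c) \<beta> \<beta>) * (- 1) ^ card ({0..<n} - \<beta>)"

definition det_poly :: "(nat \<Rightarrow> 'a) \<Rightarrow> 'a poly" where
  "det_poly c = (\<Sum>\<beta>\<in>Pow {0..<n}. monom (minor_coeff c \<beta>) (minor_exponent \<beta>))"

lemma poly_det_poly: "poly (det_poly c) l = det (dickson_matrix q n (c(0 := c 0 - l)))"
proof -
  have "(\<Prod>i\<in>{0..<n} - \<beta>. - (l ^ (q ^ i))) = (- 1) ^ card ({0..<n} - \<beta>) * l ^ minor_exponent \<beta>" for \<beta>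
    by (simp add: minor_exponent_def power_sum flip: prod_constant prod.distrib)
  thus ?thesis
    unfolding det_dickson_update_0 det_poly_def
    by (simp add: poly_sum poly_monom minor_coeff_def mult.assoc)
qed

lemma minor_exponent_inj:
  assumes "\<beta> \<subseteq> {0..<n}" "\<gamma> \<subseteq> {0..<n}" "minor_exponent \<beta> = minor_exponent \<gamma>"
  shows "\<beta> = \<gamma>"
proof -
  have "{0..<n} - \<beta> = {0..<n} - \<gamma>"
    by (rule sum_powers_inj[OF q_ge_2]) (use assms(3) in \<open>auto simp: minor_exponent_def\<close>)
  thus ?thesis using assms(1,2) by blast
qed

lemma coeff_det_poly:
  assumes \<beta>: "\<beta> \<subseteq> {0..<n}"
  shows "coeff (det_poly c) (minor_exponent \<beta>) = minor_coeff c \<beta>"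
proof -
  have "coeff (det_poly c) (minor_exponent \<beta>) =
      (\<Sum>\<gamma>\<in>Pow {0..<n}. if \<gamma> = \<beta> then minor_coeff c \<gamma> else 0)"
    unfolding det_poly_def coeff_sum coeff_monom
    by (intro sum.cong refl) (use \<beta> minor_exponent_inj in auto)
  also have "\<dots> = minor_coeff c \<beta>" using \<beta> by simp
  finally show ?thesis .
qed

lemma degree_det_poly: "degree (det_poly c) = (\<Sum>i<n. q ^ i)"
  and lead_coeff_det_poly: "lead_coeff (det_poly c) = (- 1) ^ n"
proof -
  have top: "minor_exponent {} = (\<Sum>i<n. q ^ i)" by (simp add: minor_exponent_def atLeast0LessThan)
  have "degree (det_poly c) \<le> minor_exponent {}"
    unfolding det_poly_def
  proof (rule degree_sum_le)
    fix \<beta>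
    have "minor_exponent \<beta> \<le> minor_exponent {}"
      unfolding minor_exponent_def by (intro sum_mono2) auto
    thus "degree (monom (minor_coeff c \<beta>) (minor_exponent \<beta>)) \<le> minor_exponent {}"
      using degree_monom_le le_trans by blast
  qed simp
  moreover have coeff: "coeff (det_poly c) (minor_exponent {}) = (- 1) ^ n"
    using coeff_det_poly[of "{}" c] by (simp add: minor_coeff_def det_submatrix_empty)
  hence "minor_exponent {} \<le> degree (det_poly c)" by (intro le_degree) simp
  ultimately show "degree (det_poly c) = (\<Sum>i<n. q ^ i)" using top by simp
  thus "lead_coeff (det_poly c) = (- 1) ^ n" using coeff top by simp
qed

text \<open>The values of \<open>det_poly\<close> lie in \<open>F_q\<close>, so \<open>det_poly c ^ (q - 1)\<close> is the indicator function
  of the non-roots; two such polynomials of degree \<open>< q^n\<close> agreeing on all of \<open>F_(q^n)\<close> coincide.\<close>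

lemma det_poly_power_eq:
  assumes same_roots: "\<And>l. poly (det_poly a) l = 0 \<longleftrightarrow> poly (det_poly b) l = 0"
  shows "det_poly a ^ (q - 1) = det_poly b ^ (q - 1)"
proof -
  define G where "G = det_poly a ^ (q - 1) - det_poly b ^ (q - 1)"
  have unit_power: "x ^ (q - 1) = 1" if "x ^ q = x" "x \<noteq> 0" for x :: 'a
    using that q_ge_2 by (metis One_nat_def Suc_diff_1 bot_nat_0.not_eq_extremum mult_cancel_left1
                                 not_numeral_le_zero power_Suc)
  have "poly G l = 0" for l
  proof -
    let ?x = "poly (det_poly a) l" and ?y = "poly (det_poly b) l"
    have "?x ^ q = ?x" "?y ^ q = ?y" by (simp_all add: poly_det_poly det_dickson_power_q)
    thus ?thesis using same_roots[of l] unit_power q_ge_2 by (cases "?x = 0") (simp_all add: G_def poly_power)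
  qed
  hence "{x. poly G x = 0} = UNIV" by auto
  moreover have "degree G < q ^ n"
  proof -
    have "degree G \<le> (q - 1) * (\<Sum>i<n. q ^ i)"
      unfolding G_def using degree_power_le[of "det_poly a" "q - 1"] degree_power_le[of "det_poly b" "q - 1"]
      by (intro order.trans[OF degree_diff_le_max]) (simp add: degree_det_poly mult.commute)
    also have "\<dots> < q ^ n" using sum_powers_geometric[of q n] q_ge_2 by simp
    finally show ?thesis .
  qed
  ultimately have "G = 0" using card_poly_roots_bound[of G] card_UNIV by fastforce
  thus ?thesis by (simp add: G_def)
qed

lemma principal_minors_eq_if_same_roots:
  assumes same_roots: "\<And>l. poly (det_poly a) l = 0 \<longleftrightarrow> poly (det_poly b) l = 0"
    and \<beta>: "\<beta> \<subseteq> {0..<n}"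
  shows "det (submatrix (dickson_matrix q n a) \<beta> \<beta>) = det (submatrix (dickson_matrix q n b) \<beta> \<beta>)"
proof -
  have "CHAR('a) dvd q" using q_def k_pos by simp
  hence "(of_nat q :: 'a) = 0" by (simp add: of_nat_eq_0_iff_char_dvd)
  moreover have "q - 1 + 1 = q" using q_ge_2 by simp
  ultimately have "(of_nat (q - 1) :: 'a) + 1 = 0" by (metis of_nat_1 of_nat_add)
  hence "(of_nat (q - 1) :: 'a) \<noteq> 0" by (metis add.left_neutral zero_neq_one)
  moreover have "degree (det_poly a) = degree (det_poly b)" by (simp only: degree_det_poly)
  moreover have "lead_coeff (det_poly a) = lead_coeff (det_poly b)" by (simp only: lead_coeff_det_poly)
  moreover have "lead_coeff (det_poly a) \<noteq> 0" by (simp add: lead_coeff_det_poly)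
  ultimately have "det_poly a = det_poly b"
    by (rule poly_power_eq_imp_eq[OF det_poly_power_eq[OF same_roots]])
  hence "minor_coeff a \<beta> = minor_coeff b \<beta>" using coeff_det_poly[OF \<beta>] by metis
  thus ?thesis by (simp add: minor_coeff_def)
qed

end

section \<open>Linear sets of graphs\<close>

lemma proj_point_scale:
  fixes d a b :: "'a::field"
  assumes "d \<noteq> 0"
  shows "proj_point (d * a, d * b) = proj_point (a, b)"
proof
  show "proj_point (d * a, d * b) \<subseteq> proj_point (a, b)"
  proof
    fix u assume "u \<in> proj_point (d * a, d * b)"
    then obtain c where "c \<noteq> 0" "u = ((c * d) * a, (c * d) * b)" by (auto simp: proj_point_def)
    thus "u \<in> proj_point (a, b)" using assms unfolding proj_point_def by auto
  qed
  show "proj_point (a, b) \<subseteq> proj_point (d * a, d * b)"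
  proof
    fix u assume "u \<in> proj_point (a, b)"
    then obtain c where "c \<noteq> 0" "u = (c * a, c * b)" by (auto simp: proj_point_def)
    hence "u = ((c / d) * (d * a), (c / d) * (d * b))" "c / d \<noteq> 0" using assms by simp_all
    thus "u \<in> proj_point (d * a, d * b)" unfolding proj_point_def fst_conv snd_conv by blast
  qed
qed

lemma inj_proj_point_affine: "inj (\<lambda>l::'a::field. proj_point (1, l))"
proof (rule injI)
  fix l m :: 'a assume e: "proj_point (1, l) = proj_point (1, m)"
  have "(1, l) \<in> proj_point (1, l)" unfolding proj_point_def by (intro CollectI exI[of _ 1]) simp
  hence "(1, l) \<in> proj_point (1, m)" using e by simp
  thus "l = m" unfolding proj_point_def by auto
qed

context fqn begin

lemma linear_set_graph_space:
  fixes c :: "nat \<Rightarrow> 'a"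
  shows "linear_set (graph_space q n c) =
    (\<lambda>l. proj_point (1, l)) ` {l. \<exists>x. x \<noteq> 0 \<and> qpoly q n c x = l * x}"
proof
  show "linear_set (graph_space q n c) \<subseteq> (\<lambda>l. proj_point (1, l)) ` {l. \<exists>x. x \<noteq> 0 \<and> qpoly q n c x = l * x}"
  proof
    fix P assume "P \<in> linear_set (graph_space q n c)"
    then obtain x where x: "(x, qpoly q n c x) \<noteq> (0, 0)" "P = proj_point (x, qpoly q n c x)"
      unfolding linear_set_def graph_space_def by blast
    have x0: "x \<noteq> 0" using x(1) qpoly_0[of c] by auto
    define l where "l = qpoly q n c x / x"
    have "qpoly q n c x = l * x" using x0 by (simp add: l_def)
    moreover have "P = proj_point (1, l)"
      using x(2) proj_point_scale[OF x0, of 1 l] x0 by (simp add: l_def)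
    ultimately show "P \<in> (\<lambda>l. proj_point (1, l)) ` {l. \<exists>x. x \<noteq> 0 \<and> qpoly q n c x = l * x}"
      using x0 by blast
  qed
  show "(\<lambda>l. proj_point (1, l)) ` {l. \<exists>x. x \<noteq> 0 \<and> qpoly q n c x = l * x} \<subseteq> linear_set (graph_space q n c)"
  proof
    fix P assume "P \<in> (\<lambda>l. proj_point (1, l)) ` {l. \<exists>x. x \<noteq> 0 \<and> qpoly q n c x = l * x}"
    then obtain l x where x: "x \<noteq> 0" "qpoly q n c x = l * x" "P = proj_point (1, l)" by blast
    have "P = proj_point (x, qpoly q n c x)"
      using x proj_point_scale[OF x(1), of 1 l] by (simp add: mult.commute)
    moreover have "(x, qpoly q n c x) \<in> graph_space q n c - {(0,0)}"
      using x(1) unfolding graph_space_def by auto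
    ultimately show "P \<in> linear_set (graph_space q n c)" unfolding linear_set_def by blast
  qed
qed

lemma linear_set_eq_iff_same_roots:
  fixes a b :: "nat \<Rightarrow> 'a"
  shows "linear_set (graph_space q n a) = linear_set (graph_space q n b) \<longleftrightarrow>
    (\<forall>l. poly (det_poly a) l = 0 \<longleftrightarrow> poly (det_poly b) l = 0)"
proof -
  have eigen_iff: "(\<exists>x. x \<noteq> 0 \<and> qpoly q n c x = l * x) \<longleftrightarrow> poly (det_poly c) l = 0" for c :: "nat \<Rightarrow> 'a" and l
    unfolding poly_det_poly det_dickson_eq_0_iff qpoly_update_0 by simp
  show ?thesis
    unfolding linear_set_graph_space inj_image_eq_iff[OF inj_proj_point_affine] eigen_iff by blast
qed

lemma linear_set_eq_iff_principal_minors_eq: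
  fixes a b :: "nat \<Rightarrow> 'a"
  shows "linear_set (graph_space q n a) = linear_set (graph_space q n b) \<longleftrightarrow>
    (\<forall>\<alpha>. \<alpha> \<subseteq> {..<n} \<and> \<alpha> \<noteq> {} \<longrightarrow>
       det (submatrix (dickson_matrix q n a) \<alpha> \<alpha>) = det (submatrix (dickson_matrix q n b) \<alpha> \<alpha>))"
    (is "?L \<longleftrightarrow> ?R")
proof
  assume ?L
  hence "\<And>l. poly (det_poly a) l = 0 \<longleftrightarrow> poly (det_poly b) l = 0"
    using linear_set_eq_iff_same_roots by blast
  hence "det (submatrix (dickson_matrix q n a) \<alpha> \<alpha>) = det (submatrix (dickson_matrix q n b) \<alpha> \<alpha>)"
    if "\<alpha> \<subseteq> {..<n}" for \<alpha>
    using that principal_minors_eq_if_same_roots by (metis atLeast0LessThan)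
  thus ?R by blast
next
  assume ?R
  hence "det (submatrix (dickson_matrix q n a) \<beta> \<beta>) = det (submatrix (dickson_matrix q n b) \<beta> \<beta>)"
    if "\<beta> \<in> Pow {0..<n}" for \<beta>
    using that by (cases "\<beta> = {}") (simp_all add: det_submatrix_empty atLeast0LessThan)
  hence "det_poly a = det_poly b"
    unfolding det_poly_def minor_coeff_def by (intro sum.cong refl) simp
  thus ?L using linear_set_eq_iff_same_roots by simp
qed

end

theorem mainTheorem6:
  fixes q n :: nat and a b :: "nat \<Rightarrow> 'a::{finite,field}"
  assumes "\<exists>p k. prime p \<and> k > 0 \<and> q = p ^ k"
    and "n \<ge> 2"
    and "card (UNIV :: 'a set) = q ^ n"
  shows "linear_set (graph_space q n a) = linear_set (graph_space q n b) \<longleftrightarrow>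
    (\<forall>\<alpha>. \<alpha> \<subseteq> {..<n} \<and> \<alpha> \<noteq> {} \<longrightarrow>
       det (submatrix (dickson_matrix q n a) \<alpha> \<alpha>) =
       det (submatrix (dickson_matrix q n b) \<alpha> \<alpha>))"
proof -
  obtain p k where pk: "prime p" "k > 0" "q = p ^ k" using assms(1) by blast
  have prime_CHAR: "prime CHAR('a)" by (rule prime_CHAR_semidom) (simp add: finite_imp_CHAR_pos)
  have "CHAR('a) dvd card (UNIV :: 'a set)" by (rule CHAR_dvd_card_UNIV)
  hence "CHAR('a) dvd p" using assms(3) pk(3) prime_CHAR prime_dvd_power by (metis power_mult)
  hence "CHAR('a) = p" using primes_dvd_imp_eq prime_CHAR pk(1) by blast
  interpret fqn q n k "TYPE('a)"
    by unfold_locales (simp_all add: prime_CHAR \<open>CHAR('a) = p\<close> pk assms)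
  show ?thesis by (rule linear_set_eq_iff_principal_minors_eq)
qed

end
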